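(* Let $G$ be a finite group and let $C$ be an $\mathtt{N}$-class of the first type. Assume that there exist a prime $p$, an integer $r\geq 2$ and an integer $s$ with $0\le s\le r-2$ such that $|\hat{C}|=p^r$ and $|C|=p^r-p^s$. Then $\hat{C}=C\cup\{1\}$. Moreover $s=0$ and $C=[y]_{\diamond}$ for some $y\in G$ such that $o(y)$ is not a prime power and $\phi(o(y))=p^r-1$.
   Context: $\phi$ is Euler's totient function and $o(g)$ the order of $g$. The power graph $\mathcal{P}(G)$ of a finite group $G$ has vertex set $G$, and distinct $x,y$ are adjacent iff $x=y^m$ or $y=x^m$ for some positive integer $m$. For $x\in G$, $N[x]$ is the closed neighbourhood of $x$ in $\mathcal{P}(G)$ (i.e. $x$ together with all vertices adjacent to $x$). Write $x\mathtt{N}y$ iff $N[x]=N[y]$; its classes are the $\mathtt{N}$-classes, $[x]_{\mathtt{N}}$ denoting the class of $x$. Write $x\diamond y$ iff $\langle x\rangle=\langle y\rangle$; $[x]_\diamond$ denotes the class of $x$. The star class $\mathcal{S}$ is $[1]_{\mathtt{N}}$, the set of vertices adjacent to all other vertices. An $\mathtt{N}$-class $C\neq\mathcal{S}$ is of the first type if it is also a $\diamond$-class. For $X\subseteq G$, $N[X]:=\bigcap_{x\in X}N[x]$ and $\hat{X}:=N[N[X]]$. *)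

theory Defs
  imports "HOL-Algebra.Algebra" "HOL-Number_Theory.Number_Theory"
begin

definition pg_adj :: "('a, 'b) monoid_scheme \<Rightarrow> 'a \<Rightarrow> 'a \<Rightarrow> bool" where
  "pg_adj G x y \<longleftrightarrow> x \<in> carrier G \<and> y \<in> carrier G \<and> x \<noteq> y \<and>
     ((\<exists>m::nat. m > 0 \<and> x = y [^]\<^bsub>G\<^esub> m) \<or> (\<exists>m::nat. m > 0 \<and> y = x [^]\<^bsub>G\<^esub> m))"

definition cnbhd :: "('a, 'b) monoid_scheme \<Rightarrow> 'a \<Rightarrow> 'a set" where
  "cnbhd G x = {y \<in> carrier G. y = x \<or> pg_adj G x y}"

definition N_class :: "('a, 'b) monoid_scheme \<Rightarrow> 'a \<Rightarrow> 'a set" where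
  "N_class G x = {y \<in> carrier G. cnbhd G y = cnbhd G x}"

definition diamond_class :: "('a, 'b) monoid_scheme \<Rightarrow> 'a \<Rightarrow> 'a set" where
  "diamond_class G x = {y \<in> carrier G. generate G {y} = generate G {x}}"

definition star_class :: "('a, 'b) monoid_scheme \<Rightarrow> 'a set" where
  "star_class G = N_class G (one G)"

definition is_N_class :: "('a, 'b) monoid_scheme \<Rightarrow> 'a set \<Rightarrow> bool" where
  "is_N_class G C \<longleftrightarrow> (\<exists>x \<in> carrier G. C = N_class G x)"

definition is_diamond_class :: "('a, 'b) monoid_scheme \<Rightarrow> 'a set \<Rightarrow> bool" where
  "is_diamond_class G C \<longleftrightarrow> (\<exists>x \<in> carrier G. C = diamond_class G x)"

definition first_type :: "('a, 'b) monoid_scheme \<Rightarrow> 'a set \<Rightarrow> bool" where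
  "first_type G C \<longleftrightarrow> is_N_class G C \<and> C \<noteq> star_class G \<and> is_diamond_class G C"

definition cnbhd_set :: "('a, 'b) monoid_scheme \<Rightarrow> 'a set \<Rightarrow> 'a set" where
  "cnbhd_set G A = {y \<in> carrier G. \<forall>x \<in> A. y \<in> cnbhd G x}"

definition hat :: "('a, 'b) monoid_scheme \<Rightarrow> 'a set \<Rightarrow> 'a set" where
  "hat G A = cnbhd_set G (cnbhd_set G A)"

end

theory Submission
  imports Defs
begin

(*
  Let C = [x]_<> and n = o(x). In a finite group, x and y are equal or adjacent in the power
  graph iff the cyclic subgroups <x> and <y> are comparable. Hence N[C] = N[x], and hat C is the
  set of elements whose cyclic subgroup is comparable with that of every neighbour of x; it
  contains C and 1 and is a union of <>-classes.

  If some z in hat C were not a power of x, then <x> < <z>, and [z]_<> would be a third <>-class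
  inside hat C, of size phi(o(z)) >= phi(n) = |C| because n divides o(z). Then
  |hat C| >= 2|C| + 1 > p^r, since 2 p^s <= p^r. So hat C lies in <x>.

  If n were a prime power, the subgroups of <x> would form a chain, so hat C = <x> and n = p^r;
  but phi(p^r) = p^r - p^(r-1), and s = r - 1 is excluded. Otherwise, suppose a power z of x in
  hat C lies outside C and is not 1. Each divisor e of n is the order of the neighbour x^(n/e)
  of x, so o(z), which lies strictly between 1 and n, is comparable under divisibility with
  every divisor of n. This forces n to be a prime power. Hence hat C consists of C and 1, and counting gives p^s = 1.
*)

lemma primepow_if_divisor_comparable:
  fixes n d :: nat
  assumes "n > 0" and "d dvd n" and "d \<noteq> 1" and "d \<noteq> n"
    and comparable: "\<And>e. e dvd n \<Longrightarrow> e dvd d \<or> d dvd e"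
  shows "primepow n"
proof -
  obtain q where q: "Factorial_Ring.prime q" "q dvd d" using prime_factor_nat[OF \<open>d \<noteq> 1\<close>] by blast
  obtain a m where n: "n = q ^ a * m" and "\<not> q dvd m"
    using multiplicity_decompose'[of n q] \<open>n > 0\<close> q(1) by (metis not_prime_unit not_gr0)
  have coprime: "coprime (q ^ a) m"
    using prime_imp_coprime[OF q(1) \<open>\<not> q dvd m\<close>] by simp
  have "\<not> d dvd m" using q(2) \<open>\<not> q dvd m\<close> dvd_trans by blast
  then have "m dvd d" using comparable[of m] n by simp
  have "\<not> q ^ a dvd d"
  proof
    assume "q ^ a dvd d"
    with \<open>m dvd d\<close> have "n dvd d" using n coprime divides_mult by blast
    then show False using \<open>d dvd n\<close> \<open>d \<noteq> n\<close> dvd_antisym by blast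
  qed
  then have "d dvd q ^ a" using comparable[of "q ^ a"] n by simp
  with \<open>m dvd d\<close> have "m dvd q ^ a" by (rule dvd_trans)
  then have "m = 1" using coprime_common_divisor_nat[OF coprime _ dvd_refl] by simp
  then have "a > 0" using \<open>d dvd n\<close> \<open>d \<noteq> 1\<close> n by (cases "a = 0") auto
  then show ?thesis unfolding primepow_def using q(1) n \<open>m = 1\<close> by auto
qed

lemma two_mult_prime_power_le:
  fixes p r s :: nat
  assumes "Factorial_Ring.prime p" and "s < r"
  shows "2 * p ^ s \<le> p ^ r"
proof -
  have "2 * p ^ s \<le> p * p ^ s" using prime_ge_2_nat[OF assms(1)] by simp
  also have "\<dots> = p ^ Suc s" by simp
  also have "\<dots> \<le> p ^ r"
    using \<open>s < r\<close> prime_gt_0_nat[OF assms(1)] by (intro power_increasing) auto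
  finally show ?thesis .
qed

lemma totient_prime_power_eq_diff_iff:
  fixes p r s :: nat
  assumes "Factorial_Ring.prime p" and "r > 0"
  shows "totient (p ^ r) = p ^ r - p ^ s \<longleftrightarrow> s = r - 1"
proof -
  have "p > 1" using prime_gt_1_nat[OF assms(1)] .
  obtain k where r: "r = Suc k" using \<open>r > 0\<close> gr0_implies_Suc by blast
  have totient: "totient (p ^ r) = p ^ r - p ^ (r - 1)"
    using totient_prime_power_Suc[OF assms(1), of k] r by (simp add: algebra_simps)
  have less: "p ^ (r - 1) < p ^ r" using \<open>p > 1\<close> \<open>r > 0\<close> by simp
  show ?thesis
  proof
    assume "totient (p ^ r) = p ^ r - p ^ s"
    then have "p ^ r - p ^ (r - 1) = p ^ r - p ^ s" using totient by simp
    then have "p ^ s = p ^ (r - 1)" using less by (cases "p ^ s \<le> p ^ r") auto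
    then show "s = r - 1" using \<open>p > 1\<close> by simp
  qed (simp add: totient)
qed

lemma N_class_eq:
  assumes "y \<in> N_class G x"
  shows "N_class G y = N_class G x"
  using assms unfolding N_class_def by simp

lemma first_typeE:
  assumes "first_type G C"
  obtains x where "x \<in> carrier G" "x \<noteq> \<one>\<^bsub>G\<^esub>" "C = diamond_class G x" "C = N_class G x"
proof -
  from assms obtain x0 x where C: "C = N_class G x0" "C = diamond_class G x"
    and "x \<in> carrier G" "C \<noteq> star_class G"
    unfolding first_type_def is_N_class_def is_diamond_class_def by blast
  have "x \<in> C" using \<open>x \<in> carrier G\<close> C(2) unfolding diamond_class_def by simp
  then have "C = N_class G x" using N_class_eq[of x G x0] C(1) by simp
  moreover have "x \<noteq> \<one>\<^bsub>G\<^esub>"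
    using \<open>C = N_class G x\<close> \<open>C \<noteq> star_class G\<close> unfolding star_class_def by auto
  ultimately show ?thesis using that \<open>x \<in> carrier G\<close> C(2) by blast
qed

lemma mem_hat_singleton_iff:
  "z \<in> hat G {x} \<longleftrightarrow> z \<in> carrier G \<and> (\<forall>w \<in> cnbhd G x. z \<in> cnbhd G w)"
  unfolding hat_def cnbhd_set_def cnbhd_def by auto

lemma hat_singleton_subset_cnbhd:
  assumes "x \<in> carrier G"
  shows "hat G {x} \<subseteq> cnbhd G x"
proof
  fix z assume "z \<in> hat G {x}"
  moreover have "x \<in> cnbhd G x" using assms unfolding cnbhd_def by simp
  ultimately show "z \<in> cnbhd G x" unfolding mem_hat_singleton_iff by blast
qed

lemma hat_N_class:
  assumes "x \<in> carrier G"
  shows "hat G (N_class G x) = hat G {x}"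
proof -
  have "x \<in> N_class G x" using assms unfolding N_class_def by simp
  moreover have "y \<in> cnbhd G c \<longleftrightarrow> y \<in> cnbhd G x" if "c \<in> N_class G x" for c y
    using that unfolding N_class_def by simp
  ultimately have "cnbhd_set G (N_class G x) = cnbhd_set G {x}"
    unfolding cnbhd_set_def by blast
  then show ?thesis unfolding hat_def by simp
qed

context group
begin

lemma generate_singleton_subset_iff:
  assumes "x \<in> carrier G" and "y \<in> carrier G"
  shows "generate G {y} \<subseteq> generate G {x} \<longleftrightarrow> y \<in> generate G {x}"
proof
  assume "generate G {y} \<subseteq> generate G {x}"
  then show "y \<in> generate G {x}" using generate.incl[of y "{y}" G] by blast
next
  assume "y \<in> generate G {x}"
  then show "generate G {y} \<subseteq> generate G {x}"
    by (intro generate_subgroup_incl generate_is_subgroup) (use assms(1) in auto)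
qed

lemma one_mem_diamond_class_iff:
  assumes "x \<in> carrier G"
  shows "\<one> \<in> diamond_class G x \<longleftrightarrow> x = \<one>"
  using assms generate_one generate.incl[of x "{x}" G] unfolding diamond_class_def by auto

end

locale finite_group = group +
  assumes finite_carrier: "finite (carrier G)"
begin

lemma mem_generate_iff:
  assumes "x \<in> carrier G"
  shows "y \<in> generate G {x} \<longleftrightarrow> (\<exists>k::nat. y = x [^] k)"
  using generate_pow_on_finite_carrier[OF finite_carrier assms] by blast

lemma generate_pow_subset:
  assumes "x \<in> carrier G"
  shows "generate G {x [^] (k::nat)} \<subseteq> generate G {x}"
  using generate_singleton_subset_iff[OF assms nat_pow_closed[OF assms]] mem_generate_iff[OF assms]
  by blast

lemma pow_eq_pos_pow:
  assumes "x \<in> carrier G"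
  obtains m :: nat where "m > 0" "x [^] (k::nat) = x [^] m"
proof
  show "k + ord x > 0" using ord_ge_1[OF finite_carrier assms] by simp
  show "x [^] k = x [^] (k + ord x)" using assms by (simp add: nat_pow_mult[symmetric])
qed

lemma mem_pos_pow_iff:
  assumes "x \<in> carrier G"
  shows "(\<exists>m::nat. m > 0 \<and> y = x [^] m) \<longleftrightarrow> y \<in> generate G {x}"
proof
  assume "y \<in> generate G {x}"
  then obtain k :: nat where "y = x [^] k" using mem_generate_iff[OF assms] by blast
  moreover obtain m :: nat where "m > 0" "x [^] k = x [^] m" using pow_eq_pos_pow[OF assms] .
  ultimately show "\<exists>m::nat. m > 0 \<and> y = x [^] m" by auto
qed (auto simp: mem_generate_iff[OF assms])

lemma mem_cnbhd_iff:
  assumes "x \<in> carrier G"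
  shows "y \<in> cnbhd G x \<longleftrightarrow>
    y \<in> carrier G \<and> (generate G {y} \<subseteq> generate G {x} \<or> generate G {x} \<subseteq> generate G {y})"
proof (cases "y \<in> carrier G")
  case True
  have adj: "pg_adj G x y \<longleftrightarrow> y \<noteq> x \<and> (y \<in> generate G {x} \<or> x \<in> generate G {y})"
    unfolding pg_adj_def mem_pos_pow_iff[OF assms, symmetric] mem_pos_pow_iff[OF True, symmetric]
    using assms True by blast
  show ?thesis
    unfolding generate_singleton_subset_iff[OF assms True] generate_singleton_subset_iff[OF True assms]
    by (cases "y = x") (use True adj generate.incl[of x "{x}" G] in \<open>auto simp: cnbhd_def\<close>)
qed (simp add: cnbhd_def)

lemma cnbhd_sym:
  assumes "x \<in> carrier G" and "y \<in> carrier G"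
  shows "y \<in> cnbhd G x \<longleftrightarrow> x \<in> cnbhd G y"
  using mem_cnbhd_iff[OF assms(1)] mem_cnbhd_iff[OF assms(2)] assms by auto

lemma cnbhd_eq_if_generate_eq:
  assumes "x \<in> carrier G" and "y \<in> carrier G" and "generate G {y} = generate G {x}"
  shows "cnbhd G y = cnbhd G x"
proof (intro Set.set_eqI)
  fix w show "w \<in> cnbhd G y \<longleftrightarrow> w \<in> cnbhd G x"
    using mem_cnbhd_iff[OF assms(1)] mem_cnbhd_iff[OF assms(2)] assms(3) by simp
qed

lemma one_mem_hat_singleton:
  assumes "x \<in> carrier G"
  shows "\<one> \<in> hat G {x}"
proof -
  have "\<one> \<in> cnbhd G w" if "w \<in> carrier G" for w
    using mem_cnbhd_iff[OF that] generate_one generate.one[of G "{w}"] by auto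
  then show ?thesis
    unfolding mem_hat_singleton_iff cnbhd_def by auto
qed

lemma hat_singleton_diamond_closed:
  assumes "x \<in> carrier G" and "z \<in> hat G {x}" and "y \<in> diamond_class G z"
  shows "y \<in> hat G {x}"
proof -
  have "z \<in> carrier G" "y \<in> carrier G" "generate G {y} = generate G {z}"
    using assms(2,3) unfolding mem_hat_singleton_iff diamond_class_def by auto
  then have "cnbhd G y = cnbhd G z" using cnbhd_eq_if_generate_eq by blast
  have "y \<in> cnbhd G w" if "w \<in> cnbhd G x" for w
  proof -
    have "w \<in> carrier G" "z \<in> cnbhd G w"
      using that assms(2) unfolding mem_hat_singleton_iff cnbhd_def by auto
    then show ?thesis
      using cnbhd_sym \<open>cnbhd G y = cnbhd G z\<close> \<open>z \<in> carrier G\<close> \<open>y \<in> carrier G\<close> by blast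
  qed
  then show ?thesis using \<open>y \<in> carrier G\<close> unfolding mem_hat_singleton_iff by blast
qed

lemma diamond_class_subset_hat_singleton:
  assumes "x \<in> carrier G"
  shows "diamond_class G x \<subseteq> hat G {x}"
proof -
  have "x \<in> cnbhd G w" if "w \<in> cnbhd G x" for w
    using that cnbhd_sym[OF assms] unfolding cnbhd_def by blast
  then have "x \<in> hat G {x}" using assms unfolding mem_hat_singleton_iff by blast
  then show ?thesis using hat_singleton_diamond_closed assms by blast
qed

lemma dvd_ord_if_generate_subset:
  assumes "x \<in> carrier G" and "y \<in> carrier G" and "generate G {y} \<subseteq> generate G {x}"
  shows "ord y dvd ord x"
proof -
  obtain k :: nat where "y = x [^] k"
    using assms(3) generate_singleton_subset_iff[OF assms(1,2)] mem_generate_iff[OF assms(1)] by blast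
  then have "y [^] ord x = x [^] (k * ord x)" using assms(1) by (simp add: nat_pow_pow)
  also have "\<dots> = \<one>" using pow_eq_id[OF assms(1)] by simp
  finally show ?thesis by (rule iffD1[OF pow_eq_id[OF assms(2)]])
qed

lemma generate_eq_if_subset_ord_eq:
  assumes "x \<in> carrier G" and "y \<in> carrier G"
    and "generate G {y} \<subseteq> generate G {x}" and "ord y = ord x"
  shows "generate G {y} = generate G {x}"
proof (rule card_subset_eq)
  have "generate G {x} \<subseteq> carrier G" using generate_incl assms(1) by simp
  then show "finite (generate G {x})" by (rule finite_subset[OF _ finite_carrier])
  show "card (generate G {y}) = card (generate G {x})"
    using generate_pow_card[OF assms(1)] generate_pow_card[OF assms(2)] assms(4) by simp
qed fact

lemma generate_singleton_eq_image:
  assumes "x \<in> carrier G"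
  shows "generate G {x} = (\<lambda>k. x [^] k) ` {1 .. ord x}"
proof
  show "(\<lambda>k. x [^] k) ` {1 .. ord x} \<subseteq> generate G {x}"
    using mem_generate_iff[OF assms] by auto
next
  show "generate G {x} \<subseteq> (\<lambda>k. x [^] k) ` {1 .. ord x}"
  proof
    fix y assume "y \<in> generate G {x}"
    then obtain k :: nat where k: "y = x [^] k" using mem_generate_iff[OF assms] by blast
    let ?n = "ord x"
    have "?n > 0" using ord_ge_1[OF finite_carrier assms] by simp
    have "x [^] k = x [^] (?n * (k div ?n) + k mod ?n)" by simp
    also have "\<dots> = (x [^] ?n) [^] (k div ?n) \<otimes> x [^] (k mod ?n)"
      using assms by (simp only: nat_pow_pow nat_pow_mult nat_pow_closed)
    also have "\<dots> = x [^] (k mod ?n)" using assms by simp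
    finally have mod: "y = x [^] (k mod ?n)" using k by simp
    show "y \<in> (\<lambda>k. x [^] k) ` {1 .. ?n}"
    proof (cases "k mod ?n = 0")
      case True
      then have "y = x [^] ?n" using mod assms by simp
      then show ?thesis using \<open>?n > 0\<close> by auto
    next
      case False
      then show ?thesis using mod \<open>?n > 0\<close> by (auto intro: image_eqI[of _ _ "k mod ?n"])
    qed
  qed
qed

lemma finite_diamond_class: "finite (diamond_class G x)"
  by (rule finite_subset[OF _ finite_carrier]) (auto simp: diamond_class_def)

lemma diamond_class_eq_same_ord:
  assumes "x \<in> carrier G"
  shows "diamond_class G x = {y \<in> generate G {x}. ord y = ord x}"
proof (intro Set.set_eqI iffI)
  fix y assume "y \<in> diamond_class G x"
  then have "y \<in> carrier G" and gen: "generate G {y} = generate G {x}"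
    unfolding diamond_class_def by auto
  have "y \<in> generate G {x}" using generate.incl[of y "{y}" G] gen by blast
  moreover have "ord y = ord x"
    using generate_pow_card[OF assms] generate_pow_card[OF \<open>y \<in> carrier G\<close>] gen by simp
  ultimately show "y \<in> {y \<in> generate G {x}. ord y = ord x}" by simp
next
  fix y assume y: "y \<in> {y \<in> generate G {x}. ord y = ord x}"
  then obtain k :: nat where "y = x [^] k" using mem_generate_iff[OF assms] by auto
  then have "y \<in> carrier G" using assms by simp
  then show "y \<in> diamond_class G x"
    using y generate_eq_if_subset_ord_eq[OF assms \<open>y \<in> carrier G\<close>]
      generate_singleton_subset_iff[OF assms \<open>y \<in> carrier G\<close>]
    unfolding diamond_class_def by simp
qed

lemma diamond_class_eq_image_totatives:
  assumes "x \<in> carrier G"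
  shows "diamond_class G x = (\<lambda>k. x [^] k) ` totatives (ord x)"
  unfolding diamond_class_eq_same_ord[OF assms]
proof (intro Set.set_eqI iffI)
  fix y assume y: "y \<in> {y \<in> generate G {x}. ord y = ord x}"
  then obtain k where "k \<in> {1 .. ord x}" "y = x [^] k"
    using generate_singleton_eq_image[OF assms] by auto
  moreover have "coprime k (ord x)"
    using y \<open>y = x [^] k\<close> pow_ord_eq_ord_iff[OF finite_carrier assms] by simp
  ultimately show "y \<in> (\<lambda>k. x [^] k) ` totatives (ord x)"
    by (auto intro!: imageI simp: in_totatives_iff)
next
  fix y assume "y \<in> (\<lambda>k. x [^] k) ` totatives (ord x)"
  then obtain k where "k \<in> totatives (ord x)" "y = x [^] k" by blast
  then have "coprime k (ord x)" "y = x [^] k" by (simp_all add: in_totatives_iff)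
  then show "y \<in> {y \<in> generate G {x}. ord y = ord x}"
    using mem_generate_iff[OF assms] pow_ord_eq_ord_iff[OF finite_carrier assms] by auto
qed

lemma card_diamond_class:
  assumes "x \<in> carrier G"
  shows "card (diamond_class G x) = totient (ord x)"
proof -
  have "inj_on (\<lambda>k. x [^] k) (totatives (ord x))"
    using ord_inj'[OF assms] by (rule inj_on_subset) (auto simp: totatives_def)
  then show ?thesis
    unfolding diamond_class_eq_image_totatives[OF assms] by (simp add: card_image totient_def)
qed

lemma generate_pow_gcd_ord:
  assumes "x \<in> carrier G"
  shows "generate G {x [^] k} = generate G {x [^] gcd k (ord x)}"
proof
  let ?g = "gcd k (ord x)"
  have "x [^] k = (x [^] ?g) [^] (k div ?g)"
    using assms by (simp add: nat_pow_pow)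
  then show "generate G {x [^] k} \<subseteq> generate G {x [^] ?g}"
    using assms by (simp add: generate_pow_subset)
  show "generate G {x [^] ?g} \<subseteq> generate G {x [^] k}"
  proof (cases "k = 0")
    case True
    then show ?thesis using assms generate_one mono_generate by simp
  next
    case False
    obtain s t :: nat where "k * s = ord x * t + ?g" using bezout_nat[OF False] by blast
    then have "(x [^] k) [^] s = x [^] (ord x * t + ?g)" using assms by (simp add: nat_pow_pow)
    also have "\<dots> = (x [^] ord x) [^] t \<otimes> x [^] ?g"
      using assms by (simp only: nat_pow_pow nat_pow_mult nat_pow_closed)
    also have "\<dots> = x [^] ?g" using assms by simp
    finally have "x [^] ?g = (x [^] k) [^] s" by simp
    then show ?thesis using assms by (simp add: generate_pow_subset)
  qed
qed

lemma generate_pow_antimono: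
  fixes d e :: nat
  assumes "x \<in> carrier G" and "d dvd e"
  shows "generate G {x [^] e} \<subseteq> generate G {x [^] d}"
proof -
  have "x [^] e = (x [^] d) [^] (e div d)"
    using assms by (simp add: nat_pow_pow)
  then show ?thesis using assms by (simp add: generate_pow_subset)
qed

lemma generate_pow_chain_if_primepow:
  fixes i j :: nat
  assumes "x \<in> carrier G" and "primepow (ord x)"
  shows "generate G {x [^] i} \<subseteq> generate G {x [^] j} \<or>
    generate G {x [^] j} \<subseteq> generate G {x [^] i}"
proof -
  obtain q a where "Factorial_Ring.prime q" "ord x = q ^ a" using assms(2) unfolding primepow_def by blast
  then obtain \<alpha> \<beta> where "gcd i (ord x) = q ^ \<alpha>" "gcd j (ord x) = q ^ \<beta>"
    using divides_primepow_nat[OF \<open>Factorial_Ring.prime q\<close>] by (metis gcd_dvd2)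
  then have "gcd i (ord x) dvd gcd j (ord x) \<or> gcd j (ord x) dvd gcd i (ord x)"
    by (metis le_imp_power_dvd nat_le_linear)
  then show ?thesis
    using generate_pow_gcd_ord[OF assms(1)] generate_pow_antimono[OF assms(1)] by metis
qed

lemma hat_singleton_subset_generate:
  assumes "x \<in> carrier G" and "x \<noteq> \<one>" and "card (hat G {x}) \<le> 2 * totient (ord x)"
  shows "hat G {x} \<subseteq> generate G {x}"
proof
  fix z assume z: "z \<in> hat G {x}"
  show "z \<in> generate G {x}"
  proof (rule ccontr)
    assume "z \<notin> generate G {x}"
    have "z \<in> carrier G" using z unfolding mem_hat_singleton_iff by simp
    have "z \<in> cnbhd G x" using z hat_singleton_subset_cnbhd[OF assms(1)] by blast
    then have "generate G {z} \<subseteq> generate G {x} \<or> generate G {x} \<subseteq> generate G {z}"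
      using mem_cnbhd_iff[OF assms(1)] by simp
    moreover have "\<not> generate G {z} \<subseteq> generate G {x}"
      using generate_singleton_subset_iff[OF assms(1) \<open>z \<in> carrier G\<close>] \<open>z \<notin> generate G {x}\<close>
      by simp
    ultimately have "generate G {x} \<subseteq> generate G {z}" "generate G {z} \<noteq> generate G {x}"
      by auto
    then have disjoint: "diamond_class G x \<inter> diamond_class G z = {}"
      unfolding diamond_class_def by auto
    have "z \<noteq> \<one>" using \<open>z \<notin> generate G {x}\<close> generate.one[of G "{x}"] by auto
    then have one: "\<one> \<notin> diamond_class G x \<union> diamond_class G z"
      using one_mem_diamond_class_iff[OF assms(1)] one_mem_diamond_class_iff[OF \<open>z \<in> carrier G\<close>]
        assms(2) by simp
    have "ord x dvd ord z"
      using dvd_ord_if_generate_subset[OF \<open>z \<in> carrier G\<close> assms(1)] \<open>generate G {x} \<subseteq> _\<close> .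
    then have "totient (ord x) \<le> totient (ord z)"
      using totient_dvd_mono ord_ge_1[OF finite_carrier \<open>z \<in> carrier G\<close>] by simp
    then have "2 * totient (ord x) + 1 \<le> card (diamond_class G x \<union> diamond_class G z \<union> {\<one>})"
      using disjoint one finite_diamond_class
      by (simp add: card_Un_disjoint card_diamond_class assms(1) \<open>z \<in> carrier G\<close>)
    also have "\<dots> \<le> card (hat G {x})"
    proof (rule card_mono)
      show "finite (hat G {x})"
        by (rule finite_subset[OF _ finite_carrier]) (auto simp: mem_hat_singleton_iff)
      show "diamond_class G x \<union> diamond_class G z \<union> {\<one>} \<subseteq> hat G {x}"
        using diamond_class_subset_hat_singleton[OF assms(1)] one_mem_hat_singleton[OF assms(1)]
          hat_singleton_diamond_closed[OF assms(1) z] by blast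
    qed
    finally show False using assms(3) by simp
  qed
qed

lemma generate_subset_hat_singleton_if_primepow:
  assumes "x \<in> carrier G" and "primepow (ord x)"
  shows "generate G {x} \<subseteq> hat G {x}"
proof
  fix z assume "z \<in> generate G {x}"
  then obtain i :: nat where z: "z = x [^] i" using mem_generate_iff[OF assms(1)] by blast
  have "z \<in> cnbhd G w" if w: "w \<in> cnbhd G x" for w
  proof -
    have "w \<in> carrier G" using w unfolding cnbhd_def by simp
    from w have "generate G {w} \<subseteq> generate G {x} \<or> generate G {x} \<subseteq> generate G {w}"
      using mem_cnbhd_iff[OF assms(1)] by simp
    then have "generate G {z} \<subseteq> generate G {w} \<or> generate G {w} \<subseteq> generate G {z}"
    proof
      assume "generate G {w} \<subseteq> generate G {x}"
      then obtain j :: nat where "w = x [^] j"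
        using generate_singleton_subset_iff[OF assms(1) \<open>w \<in> carrier G\<close>] mem_generate_iff[OF assms(1)]
        by blast
      then show ?thesis using generate_pow_chain_if_primepow[OF assms, of i j] z by simp
    next
      assume "generate G {x} \<subseteq> generate G {w}"
      then show ?thesis using generate_pow_subset[OF assms(1), of i] z by blast
    qed
    then show ?thesis using mem_cnbhd_iff[OF \<open>w \<in> carrier G\<close>] z assms(1) by simp
  qed
  then show "z \<in> hat G {x}" unfolding mem_hat_singleton_iff using z assms(1) by simp
qed

lemma hat_singleton_inter_generate_subset:
  assumes "x \<in> carrier G" and "\<not> primepow (ord x)"
  shows "hat G {x} \<inter> generate G {x} \<subseteq> diamond_class G x \<union> {\<one>}"
proof
  fix z assume z: "z \<in> hat G {x} \<inter> generate G {x}"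
  let ?n = "ord x" and ?d = "ord z"
  have "z \<in> carrier G" using z by (simp add: mem_hat_singleton_iff)
  have sub: "generate G {z} \<subseteq> generate G {x}"
    using z generate_singleton_subset_iff[OF assms(1) \<open>z \<in> carrier G\<close>] by simp
  have "?n > 0" using ord_ge_1[OF finite_carrier assms(1)] by simp
  have comparable: "e dvd ?d \<or> ?d dvd e" if e: "e dvd ?n" for e
  proof -
    obtain c where c: "?n = e * c" using e by (rule dvdE)
    then have "c > 0" using \<open>?n > 0\<close> by simp
    let ?w = "x [^] c"
    have "?w \<in> carrier G" using assms(1) by simp
    have "ord ?w = e" using ord_pow[OF assms(1), of c] c \<open>c > 0\<close> by simp
    have "?w \<in> cnbhd G x"
      using mem_cnbhd_iff[OF assms(1)] generate_pow_subset[OF assms(1)] assms(1) by simp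
    then have "z \<in> cnbhd G ?w" using z by (simp add: mem_hat_singleton_iff)
    then have "generate G {z} \<subseteq> generate G {?w} \<or> generate G {?w} \<subseteq> generate G {z}"
      using mem_cnbhd_iff[OF \<open>?w \<in> carrier G\<close>] by simp
    then show ?thesis
      using dvd_ord_if_generate_subset[OF \<open>?w \<in> carrier G\<close> \<open>z \<in> carrier G\<close>]
        dvd_ord_if_generate_subset[OF \<open>z \<in> carrier G\<close> \<open>?w \<in> carrier G\<close>] \<open>ord ?w = e\<close>
      by auto
  qed
  show "z \<in> diamond_class G x \<union> {\<one>}"
  proof (rule ccontr)
    assume z_notin: "z \<notin> diamond_class G x \<union> {\<one>}"
    then have "?d \<noteq> ?n"
      using generate_eq_if_subset_ord_eq[OF assms(1) \<open>z \<in> carrier G\<close> sub] \<open>z \<in> carrier G\<close>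
      unfolding diamond_class_def by auto
    moreover have "?d \<noteq> 1" using ord_eq_1[OF \<open>z \<in> carrier G\<close>] z_notin by auto
    ultimately have "primepow ?n"
      using primepow_if_divisor_comparable[OF \<open>?n > 0\<close>
          dvd_ord_if_generate_subset[OF assms(1) \<open>z \<in> carrier G\<close> sub]] comparable
      by blast
    then show False using assms(2) by contradiction
  qed
qed

lemma hat_singleton_eq_generate_if_primepow:
  assumes "x \<in> carrier G" and "x \<noteq> \<one>" and "card (hat G {x}) \<le> 2 * totient (ord x)"
    and "primepow (ord x)"
  shows "hat G {x} = generate G {x}"
  using hat_singleton_subset_generate[OF assms(1-3)]
    generate_subset_hat_singleton_if_primepow[OF assms(1,4)] by (rule subset_antisym)

lemma hat_singleton_eq_if_not_primepow:
  assumes "x \<in> carrier G" and "x \<noteq> \<one>" and "card (hat G {x}) \<le> 2 * totient (ord x)"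
    and "\<not> primepow (ord x)"
  shows "hat G {x} = diamond_class G x \<union> {\<one>}"
proof (rule subset_antisym)
  show "hat G {x} \<subseteq> diamond_class G x \<union> {\<one>}"
    using hat_singleton_subset_generate[OF assms(1-3)]
      hat_singleton_inter_generate_subset[OF assms(1,4)] by blast
  show "diamond_class G x \<union> {\<one>} \<subseteq> hat G {x}"
    using diamond_class_subset_hat_singleton[OF assms(1)] one_mem_hat_singleton[OF assms(1)]
    by simp
qed

end

theorem mainTheorem1:
  fixes G :: "('a, 'b) monoid_scheme" and C :: "'a set" and p r s :: nat
  assumes "group G" and "finite (carrier G)"
    and "first_type G C"
    and "Factorial_Ring.prime p" and "r \<ge> 2" and "s \<le> r - 2"
    and "card (hat G C) = p ^ r" and "card C = p ^ r - p ^ s"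
  shows "hat G C = C \<union> {one G} \<and> s = 0 \<and>
    (\<exists>y \<in> carrier G. C = diamond_class G y \<and> \<not> primepow (group.ord G y) \<and>
        totient (group.ord G y) = p ^ r - 1)"
proof -
  interpret finite_group G using assms(1,2) by (simp add: finite_group_def finite_group_axioms_def)
  obtain x where x: "x \<in> carrier G" "x \<noteq> \<one>\<^bsub>G\<^esub>" "C = diamond_class G x" "C = N_class G x"
    using first_typeE[OF assms(3)] by blast
  have hat: "hat G C = hat G {x}" using hat_N_class[OF x(1)] x(4) by simp
  have card_C: "card C = totient (group.ord G x)" using card_diamond_class[OF x(1)] x(3) by simp
  have "2 * p ^ s \<le> p ^ r" using two_mult_prime_power_le[OF assms(4)] assms(5,6) by simp
  then have small: "card (hat G {x}) \<le> 2 * totient (group.ord G x)"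
    using assms(7,8) hat card_C by simp
  have not_primepow: "\<not> primepow (group.ord G x)"
  proof
    assume "primepow (group.ord G x)"
    then have "totient (p ^ r) = p ^ r - p ^ s"
      using hat_singleton_eq_generate_if_primepow[OF x(1,2) small] generate_pow_card[OF x(1)]
        hat card_C assms(7,8) by simp
    then show False using totient_prime_power_eq_diff_iff[OF assms(4)] assms(5,6) by simp
  qed
  have hat_eq: "hat G C = C \<union> {\<one>\<^bsub>G\<^esub>}"
    using hat_singleton_eq_if_not_primepow[OF x(1,2) small not_primepow] hat x(3) by simp
  moreover have "\<one>\<^bsub>G\<^esub> \<notin> C" using one_mem_diamond_class_iff[OF x(1)] x(2,3) by simp
  ultimately have "p ^ r = p ^ r - p ^ s + 1" using finite_diamond_class x(3) assms(7,8) by simp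
  moreover have "p ^ s \<le> p ^ r"
    using prime_gt_0_nat[OF assms(4)] assms(5,6) by (intro power_increasing) auto
  ultimately have "p ^ s = 1" by linarith
  then have "s = 0" using one_less_power[OF prime_gt_1_nat[OF assms(4)]] by (cases "s = 0") auto
  moreover have "totient (group.ord G x) = p ^ r - 1" using card_C assms(8) \<open>p ^ s = 1\<close> by simp
  ultimately show ?thesis using hat_eq x(1,3) not_primepow by blast
qed

end
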